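(* Consider the delay differential system \[ \begin{aligned} \dot T(t)&= s-dT(t)+aT(t)\Big(1-\frac{T(t)+I(t)}{T_{\max}}\Big)-\frac{bT(t)V(t)}{1+\alpha V(t)},\\ \dot I(t)&= \frac{bT(t-\tau)V(t-\tau)}{1+\alpha V(t-\tau)}+aI(t)\Big(1-\frac{T(t)+I(t)}{T_{\max}}\Big)-\mu I(t),\\ \dot V(t)&= pI(t)-cV(t), \end{aligned} \] with positive constants $s,d,a,T_{\max},b,\alpha,\mu,p,c$ and $\tau\ge0$, and nonnegative continuous initial data on $[-\tau,0]$. Let \[ T_0=\frac{T_{\max}}{2a}\Big(a-d+\sqrt{(a-d)^2+\tfrac{4as}{T_{\max}}}\Big),\qquad R_0=\frac{1}{\mu}\Big[\frac{bpT_0}{c}+a\Big(1-\frac{T_0}{T_{\max}}\Big)\Big]. \] If $R_0\le1$, then the infection-free equilibrium $E_1=(T_0,0,0)$ is globally asymptotically stable.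
   Context: $E_1=(T_0,0,0)$ is a constant solution of the system. *)

theory Defs
  imports "HOL-Analysis.Analysis"
begin

definition T0_eq :: "real \<Rightarrow> real \<Rightarrow> real \<Rightarrow> real \<Rightarrow> real" where
  "T0_eq s d a Tmax = Tmax / (2 * a) * (a - d + sqrt ((a - d)^2 + 4 * a * s / Tmax))"

definition R0_num :: "real \<Rightarrow> real \<Rightarrow> real \<Rightarrow> real \<Rightarrow> real \<Rightarrow> real \<Rightarrow> real \<Rightarrow> real \<Rightarrow> real" where
  "R0_num s d a Tmax b mu p c =
     (1 / mu) * (b * p * T0_eq s d a Tmax / c + a * (1 - T0_eq s d a Tmax / Tmax))"

definition is_solution ::
  "real \<Rightarrow> real \<Rightarrow> real \<Rightarrow> real \<Rightarrow> real \<Rightarrow> real \<Rightarrow> real \<Rightarrow> real \<Rightarrow> real \<Rightarrow> real \<Rightarrow>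
   (real \<Rightarrow> real) \<Rightarrow> (real \<Rightarrow> real) \<Rightarrow> (real \<Rightarrow> real) \<Rightarrow> bool" where
  "is_solution s d a Tmax b \<alpha> \<mu> p c \<tau> T I V \<longleftrightarrow>
     (\<forall>t\<in>{-\<tau>..0}. T t \<ge> 0 \<and> I t \<ge> 0 \<and> V t \<ge> 0) \<and>
     continuous_on {-\<tau>..} T \<and> continuous_on {-\<tau>..} I \<and> continuous_on {-\<tau>..} V \<and>
     (\<forall>t\<ge>0.
        (T has_real_derivative
           (s - d * T t + a * T t * (1 - (T t + I t) / Tmax) - b * T t * V t / (1 + \<alpha> * V t)))
          (at t within {0..}) \<and>
        (I has_real_derivative
           (b * T (t - \<tau>) * V (t - \<tau>) / (1 + \<alpha> * V (t - \<tau>))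
            + a * I t * (1 - (T t + I t) / Tmax) - \<mu> * I t))
          (at t within {0..}) \<and>
        (V has_real_derivative (p * I t - c * V t)) (at t within {0..}))"

end

theory Submission
  imports Defs
begin

text \<open>Solutions stay nonnegative (the negative parts of the three components
  can only grow at a rate proportional to themselves, so they stay zero), and \<open>T\<close> stays
  positive. With \<open>K = T\<^sub>0\<close> and the Volterra function \<open>x - K - K ln (x / K)\<close>, the functional
  \<open>L(t) = Volterra(T t) + I t + (b K / c) V t + \<integral>\<^bsub>t-\<tau>\<^esub>\<^sup>t b T V / (1 + \<alpha> V)\<close>
  has derivative at most
  \<open>-(a / Tmax) (T - K + I)\<^sup>2 - s (T - K)\<^sup>2 / (K T) - b K \<alpha> V\<^sup>2 / (1 + \<alpha> V)\<close>,
  the remaining term being \<open>(R\<^sub>0 - 1) \<mu> I \<le> 0\<close>. Since \<open>L\<close> is nonincreasing and the Volterra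
  function is small only near \<open>K\<close>, \<open>E\<^sub>1\<close> is stable. Boundedness of \<open>L\<close> bounds the solution and
  its derivative, and a Barbalat-type argument turns the dissipation of the three squares into
  convergence.\<close>

lemma DERIV_le_imp_diff_le:
  fixes f f' :: "real \<Rightarrow> real"
  assumes "a \<le> b" and "continuous_on {a..b} f"
    and "\<And>t. a < t \<Longrightarrow> t < b \<Longrightarrow> (f has_real_derivative f' t) (at t)"
    and "\<And>t. a < t \<Longrightarrow> t < b \<Longrightarrow> f' t \<le> q"
  shows "f b - f a \<le> q * (b - a)"
proof -
  have "(\<lambda>t. f t - q * t) b \<le> (\<lambda>t. f t - q * t) a"
  proof (rule DERIV_nonpos_imp_decreasing_open[OF \<open>a \<le> b\<close>])
    fix t assume "a < t" "t < b"
    then show "\<exists>y. ((\<lambda>t. f t - q * t) has_real_derivative y) (at t) \<and> y \<le> 0"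
      using assms(3,4)[of t] by (intro exI[of _ "f' t - q"]) (auto intro!: derivative_eq_intros)
  qed (use assms(2) in \<open>auto intro!: continuous_intros\<close>)
  then show ?thesis by (simp add: algebra_simps)
qed

lemma DERIV_bounded_imp_Lipschitz:
  fixes f f' :: "real \<Rightarrow> real"
  assumes cont: "continuous_on {t0..} f"
    and der: "\<And>t. t > t0 \<Longrightarrow> (f has_real_derivative f' t) (at t)"
    and bound: "\<And>t. t > t0 \<Longrightarrow> \<bar>f' t\<bar> \<le> C"
    and "u \<ge> t0" "v \<ge> t0"
  shows "\<bar>f u - f v\<bar> \<le> C * \<bar>u - v\<bar>"
proof -
  have *: "\<bar>f y - f x\<bar> \<le> C * (y - x)" if "t0 \<le> x" "x \<le> y" for x y
  proof -
    have c: "continuous_on {x..y} f" "continuous_on {x..y} (\<lambda>t. - f t)"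
      using cont that by (auto intro!: continuous_intros intro: continuous_on_subset)
    have "f y - f x \<le> C * (y - x)"
      by (rule DERIV_le_imp_diff_le[OF \<open>x \<le> y\<close> c(1), of f'])
         (use der bound that in \<open>auto simp: abs_le_iff\<close>)
    moreover have "- f y - - f x \<le> C * (y - x)"
      by (rule DERIV_le_imp_diff_le[OF \<open>x \<le> y\<close> c(2), of "\<lambda>t. - f' t"])
         (use der bound that in \<open>auto intro!: derivative_eq_intros simp: abs_le_iff\<close>)
    ultimately show ?thesis by (simp add: abs_le_iff)
  qed
  show ?thesis
    using *[of u v] *[of v u] assms(4,5) by (cases "u \<le> v") (auto simp: abs_minus_commute)
qed

lemma eventually_no_drop:
  fixes L :: "real \<Rightarrow> real"
  assumes antimono: "\<And>x y. t0 \<le> x \<Longrightarrow> x \<le> y \<Longrightarrow> L y \<le> L x"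
    and nonneg: "\<And>t. t \<ge> t0 \<Longrightarrow> L t \<ge> 0" and "q > 0" "h \<ge> 0"
    and drop: "\<And>t. t \<ge> t0 \<Longrightarrow> P t \<Longrightarrow> L (t + h) \<le> L t - q"
  shows "\<forall>\<^sub>F t in at_top. \<not> P t"
proof (rule ccontr)
  assume "\<not> (\<forall>\<^sub>F t in at_top. \<not> P t)"
  then have often: "\<exists>t'\<ge>t. P t'" for t
    by (auto simp: eventually_at_top_linorder)
  have "\<exists>t\<ge>t0. L t \<le> L t0 - real n * q" for n
  proof (induction n)
    case (Suc n)
    then obtain t where t: "t \<ge> t0" "L t \<le> L t0 - real n * q" by auto
    obtain t' where t': "t' \<ge> t" "P t'" using often by blast
    have "L (t' + h) \<le> L t0 - real (Suc n) * q"
      using drop[of t'] antimono[of t t'] t t' by (simp add: algebra_simps)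
    then show ?case using t t' \<open>h \<ge> 0\<close> by (intro exI[of _ "t' + h"]) auto
  qed auto
  moreover obtain n where "real n * q > L t0" using \<open>q > 0\<close> reals_Archimedean3 by blast
  ultimately show False using nonneg by (meson diff_less_0_iff_less order.trans not_less)
qed

text \<open>Barbalat-type argument: while \<open>g \<ge> e\<close>, the Lipschitz bound keeps \<open>g \<ge> e/2\<close>
  for a fixed time \<open>h\<close>, during which \<open>L\<close> drops by a fixed amount.\<close>
lemma Lyapunov_dissipation_tendsto_zero:
  fixes L L' g :: "real \<Rightarrow> real"
  assumes cont: "continuous_on {t0..} L"
    and der: "\<And>t. t > t0 \<Longrightarrow> (L has_real_derivative L' t) (at t)"
    and dissipation: "\<And>t. t > t0 \<Longrightarrow> L' t \<le> - k * g t"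
    and L_nonneg: "\<And>t. t \<ge> t0 \<Longrightarrow> L t \<ge> 0"
    and g_nonneg: "\<And>t. t \<ge> t0 \<Longrightarrow> g t \<ge> 0"
    and k: "k > 0" and M: "M \<ge> 0"
    and Lipschitz: "\<And>u v. u \<ge> t0 \<Longrightarrow> v \<ge> t0 \<Longrightarrow> \<bar>g u - g v\<bar> \<le> M * \<bar>u - v\<bar>"
  shows "(g \<longlongrightarrow> 0) at_top"
proof (rule order_tendstoI)
  fix e :: real assume "e < 0"
  then show "\<forall>\<^sub>F t in at_top. e < g t"
    unfolding eventually_at_top_linorder using g_nonneg by (meson less_le_trans)
next
  fix e :: real assume e: "e > 0"
  define h where "h = e / (2 * (M + 1))"
  have h: "h > 0" "M * h \<le> e / 2" using e M by (auto simp: h_def field_simps)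
  have decrease: "L y - L x \<le> q * (y - x)"
    if "t0 \<le> x" "x \<le> y" "\<And>r. x < r \<Longrightarrow> r < y \<Longrightarrow> L' r \<le> q" for x y q
    by (rule DERIV_le_imp_diff_le[OF \<open>x \<le> y\<close> continuous_on_subset[OF cont] der])
      (use that in auto)
  have antimono: "L y \<le> L x" if "t0 \<le> x" "x \<le> y" for x y
  proof -
    have "L y - L x \<le> 0 * (y - x)"
    proof (rule decrease[OF that])
      fix r assume "x < r" "r < y"
      then show "L' r \<le> 0"
        using dissipation[of r] mult_nonneg_nonneg[of k "g r"] g_nonneg[of r] k that by linarith
    qed
    then show ?thesis by simp
  qed
  have drop: "L (t + h) \<le> L t - k * (e / 2) * h" if "t \<ge> t0" "\<not> g t < e" for t
  proof -
    have "L' r \<le> - (k * (e / 2))" if "t < r" "r < t + h" for r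
    proof -
      have "\<bar>g r - g t\<bar> \<le> M * \<bar>r - t\<bar>" using Lipschitz[of r t] \<open>t \<ge> t0\<close> that by simp
      also have "\<dots> \<le> M * h" using that M by (intro mult_left_mono) auto
      finally have "k * (e / 2) \<le> k * g r"
        using h \<open>\<not> g t < e\<close> k by (intro mult_left_mono) auto
      then show ?thesis using dissipation[of r] that \<open>t \<ge> t0\<close> by linarith
    qed
    then have "L (t + h) - L t \<le> - (k * (e / 2)) * (t + h - t)"
      using h that by (intro decrease) auto
    then show ?thesis by simp
  qed
  have "k * (e / 2) * h > 0" using k e h by simp
  from eventually_no_drop[where P = "\<lambda>t. \<not> g t < e" and L = L, OF antimono L_nonneg this
      less_imp_le[OF \<open>h > 0\<close>] drop]
  show "\<forall>\<^sub>F t in at_top. g t < e" by simp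
qed

lemma Lyapunov_square_tendsto_zero:
  fixes L L' f f' :: "real \<Rightarrow> real"
  assumes cont: "continuous_on {t0..} L"
    and der: "\<And>t. t > t0 \<Longrightarrow> (L has_real_derivative L' t) (at t)"
    and dissipation: "\<And>t. t > t0 \<Longrightarrow> L' t \<le> - k * (f t)\<^sup>2"
    and L_nonneg: "\<And>t. t \<ge> t0 \<Longrightarrow> L t \<ge> 0" and k: "k > 0"
    and f_cont: "continuous_on {t0..} f"
    and f_der: "\<And>t. t > t0 \<Longrightarrow> (f has_real_derivative f' t) (at t)"
    and f_bound: "\<And>t. t \<ge> t0 \<Longrightarrow> \<bar>f t\<bar> \<le> A"
    and f'_bound: "\<And>t. t > t0 \<Longrightarrow> \<bar>f' t\<bar> \<le> C"
  shows "(f \<longlongrightarrow> 0) at_top"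
proof -
  have A: "A \<ge> 0" using f_bound[of t0] by simp
  have C: "C \<ge> 0" using f'_bound[of "t0 + 1"] by simp
  have "\<bar>(f u)\<^sup>2 - (f v)\<^sup>2\<bar> \<le> (2 * A * C) * \<bar>u - v\<bar>" if "u \<ge> t0" "v \<ge> t0" for u v
  proof -
    have "\<bar>(f u)\<^sup>2 - (f v)\<^sup>2\<bar> = \<bar>f u + f v\<bar> * \<bar>f u - f v\<bar>"
      by (simp add: power2_eq_square algebra_simps flip: abs_mult)
    also have "\<dots> \<le> (2 * A) * (C * \<bar>u - v\<bar>)"
      using f_bound[of u] f_bound[of v] that A
        DERIV_bounded_imp_Lipschitz[OF f_cont f_der f'_bound that]
      by (intro mult_mono) auto
    finally show ?thesis by simp
  qed
  then have "((\<lambda>t. (f t)\<^sup>2) \<longlongrightarrow> 0) at_top"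
    using A C
    by (intro Lyapunov_dissipation_tendsto_zero[OF cont der dissipation L_nonneg _ k,
          where M = "2 * A * C"]) auto
  then have "((\<lambda>t. sqrt ((f t)\<^sup>2)) \<longlongrightarrow> 0) at_top"
    by (rule tendsto_real_sqrt[where x = 0, simplified])
  then show ?thesis by (simp add: tendsto_rabs_zero_iff)
qed

lemma lower_bound_while_negative:
  fixes x x' :: "real \<Rightarrow> real"
  assumes "a \<le> b" and cont: "continuous_on {a..b} x"
    and der: "\<And>t. a < t \<Longrightarrow> t < b \<Longrightarrow> (x has_real_derivative x' t) (at t)"
    and start: "x a \<ge> 0" and B: "B \<ge> 0"
    and lower: "\<And>t. a < t \<Longrightarrow> t < b \<Longrightarrow> x t < 0 \<Longrightarrow> x' t \<ge> - B"
    and t: "t \<in> {a..b}"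
  shows "x t \<ge> - B * (b - a)"
proof (cases "x t \<ge> 0")
  case True
  moreover have "B * (b - a) \<ge> 0" using B \<open>a \<le> b\<close> by simp
  ultimately show ?thesis by linarith
next
  case False
  define Z where "Z = {u \<in> {a..t}. 0 \<le> x u}"
  define u0 where "u0 = Sup Z"
  have cont_t: "continuous_on {a..t} x" by (rule continuous_on_subset[OF cont]) (use t in auto)
  have "closed Z"
    unfolding Z_def using continuous_on_closed_Collect_le[OF continuous_on_const cont_t] by simp
  moreover have "a \<in> Z" "bdd_above Z" using t start by (auto simp: Z_def bdd_above_def)
  ultimately have u0: "u0 \<in> Z" "a \<le> u0" unfolding u0_def
    by (auto intro: closed_contains_Sup cSup_upper)
  have "u0 \<le> t" "x u0 \<ge> 0" using u0(1) by (simp_all add: Z_def)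
  then have "u0 < t" using False by (cases "u0 = t") auto
  have negative: "x r < 0" if "u0 < r" "r \<le> t" for r
    using cSup_upper[OF _ \<open>bdd_above Z\<close>, of r] that u0 by (force simp: Z_def u0_def)
  have "(\<lambda>r. - x r) t - (\<lambda>r. - x r) u0 \<le> B * (t - u0)"
  proof (rule DERIV_le_imp_diff_le[of u0 t _ "\<lambda>r. - x' r"])
    show "continuous_on {u0..t} (\<lambda>r. - x r)"
      by (intro continuous_on_minus continuous_on_subset[OF cont_t]) (use u0 in auto)
  next
    fix r assume r: "u0 < r" "r < t"
    then show "((\<lambda>r. - x r) has_real_derivative - x' r) (at r)"
      using der[of r] u0 t by (auto intro!: derivative_eq_intros)
    show "- x' r \<le> B" using lower[of r] negative[of r] r u0 t by auto
  qed (use \<open>u0 < t\<close> in simp)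
  moreover have "B * (t - u0) \<le> B * (b - a)" using B u0 t by (intro mult_left_mono) auto
  ultimately show ?thesis using u0 by (simp add: Z_def)
qed

text \<open>Every component stays above \<open>-card S * C * (b - a) * max N\<close>, where \<open>N\<close> is the total
  negative part; this is below \<open>max N\<close> unless \<open>max N = 0\<close>.\<close>
lemma nonneg_if_deriv_ge_neg_parts:
  fixes x x' :: "'i \<Rightarrow> real \<Rightarrow> real" and a b C :: real
  assumes "finite S" "a \<le> b" "C \<ge> 0"
    and cont: "\<And>i. i \<in> S \<Longrightarrow> continuous_on {a..b} (x i)"
    and der: "\<And>i t. i \<in> S \<Longrightarrow> a < t \<Longrightarrow> t < b \<Longrightarrow> (x i has_real_derivative x' i t) (at t)"
    and start: "\<And>i. i \<in> S \<Longrightarrow> x i a \<ge> 0"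
    and lower: "\<And>i t. i \<in> S \<Longrightarrow> a < t \<Longrightarrow> t < b \<Longrightarrow> x i t < 0 \<Longrightarrow>
                  x' i t \<ge> - C * (\<Sum>j\<in>S. max 0 (- x j t))"
    and short: "card S * C * (b - a) < 1"
    and "i \<in> S" "t \<in> {a..b}"
  shows "x i t \<ge> 0"
proof -
  define N where "N t = (\<Sum>j\<in>S. max 0 (- x j t))" for t
  have "continuous_on {a..b} N"
    unfolding N_def using cont by (intro continuous_intros) auto
  then obtain m :: real where m: "m \<in> {a..b}" "\<And>u. u \<in> {a..b} \<Longrightarrow> N u \<le> N m"
    using continuous_attains_sup[of "{a..b}" N] \<open>a \<le> b\<close> by auto
  have N_nonneg: "N u \<ge> 0" for u unfolding N_def by (intro sum_nonneg) auto
  have bound: "x j u \<ge> - (C * N m) * (b - a)" if "j \<in> S" "u \<in> {a..b}" for j u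
  proof (rule lower_bound_while_negative[OF \<open>a \<le> b\<close> cont der start])
    fix r assume "a < r" "r < b" "x j r < 0"
    moreover have "C * N r \<le> C * N m" using m(2)[of r] \<open>a < r\<close> \<open>r < b\<close> \<open>C \<ge> 0\<close>
      by (intro mult_left_mono) auto
    ultimately show "x' j r \<ge> - (C * N m)"
      using lower[OF \<open>j \<in> S\<close>, of r] unfolding N_def by linarith
  qed (use that \<open>C \<ge> 0\<close> N_nonneg in auto)
  have "N m = (\<Sum>j\<in>S. max 0 (- x j m))" by (simp add: N_def)
  also have "\<dots> \<le> (\<Sum>j\<in>S. C * N m * (b - a))"
  proof (rule sum_mono)
    fix j assume "j \<in> S"
    have "0 \<le> C * N m * (b - a)" using \<open>C \<ge> 0\<close> N_nonneg \<open>a \<le> b\<close> by simp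
    then show "max 0 (- x j m) \<le> C * N m * (b - a)" using bound[OF \<open>j \<in> S\<close> m(1)] by simp
  qed
  also have "\<dots> = (card S * C * (b - a)) * N m" by simp
  finally have "N m = 0"
    using short N_nonneg[of m] by (cases "N m > 0") (auto simp: mult_le_cancel_right1)
  then have "N t = 0" using m(2)[of t] N_nonneg[of t] \<open>t \<in> {a..b}\<close> by simp
  then show ?thesis
    using \<open>finite S\<close> \<open>i \<in> S\<close> by (auto simp: N_def sum_nonneg_eq_0_iff)
qed

lemma continuous_induction:
  fixes P :: "real \<Rightarrow> bool"
  assumes closed: "\<And>t. t \<ge> a \<Longrightarrow> \<forall>u\<in>{a..<t}. P u \<Longrightarrow> P t"
    and extend: "\<And>t. t \<ge> a \<Longrightarrow> \<forall>u\<in>{a..t}. P u \<Longrightarrow> \<exists>\<eta>>0. \<forall>u\<in>{t..t + \<eta>}. P u"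
    and "t \<ge> a"
  shows "P t"
proof (rule ccontr)
  assume "\<not> P t"
  define F where "F = {u. u \<ge> a \<and> \<not> P u}"
  define t1 where "t1 = Inf F"
  have "t \<in> F" "bdd_below F" using \<open>\<not> P t\<close> \<open>t \<ge> a\<close> by (auto simp: F_def bdd_below_def)
  then have "t1 \<ge> a" unfolding t1_def F_def by (auto intro: cInf_greatest)
  have "\<forall>u\<in>{a..<t1}. P u"
  proof
    fix u assume u: "u \<in> {a..<t1}"
    show "P u"
    proof (rule ccontr)
      assume "\<not> P u"
      then have "u \<in> F" using u by (simp add: F_def)
      then have "t1 \<le> u" unfolding t1_def using \<open>bdd_below F\<close> by (rule cInf_lower)
      then show False using u by simp
    qed
  qed
  then have "\<forall>u\<in>{a..t1}. P u"
    using closed[OF \<open>t1 \<ge> a\<close>] by (metis atLeastAtMost_iff atLeastLessThan_iff order_less_le)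
  then obtain \<eta> where "\<eta> > 0" "\<forall>u\<in>{t1..t1 + \<eta>}. P u" using extend \<open>t1 \<ge> a\<close> by blast
  moreover obtain u where "u \<in> F" "u < t1 + \<eta>"
    using \<open>t \<in> F\<close> \<open>\<eta> > 0\<close> cInf_less_iff[of F "t1 + \<eta>"] \<open>bdd_below F\<close> by (auto simp: t1_def)
  moreover have "t1 \<le> u" using \<open>u \<in> F\<close> \<open>bdd_below F\<close> by (simp add: t1_def cInf_lower)
  ultimately show False by (auto simp: F_def)
qed

lemma ln_le_half: "(x::real) > 0 \<Longrightarrow> ln x \<le> x / 2"
proof -
  assume x: "x > 0"
  have "ln x = ln (x / exp 1) + 1" using x by (simp add: ln_div)
  also have "\<dots> \<le> x / exp 1" using ln_le_minus_one[of "x / exp 1"] x by simp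
  also have "\<dots> \<le> x / 2"
    using x exp_ge_add_one_self[of 1] by (intro divide_left_mono) auto
  finally show ?thesis .
qed

definition volterra :: "real \<Rightarrow> real \<Rightarrow> real" where
  "volterra K x = x - K - K * ln (x / K)"

context
  fixes K :: real
  assumes K: "K > 0"
begin

lemma volterra_has_derivative:
  "x > 0 \<Longrightarrow> (volterra K has_real_derivative 1 - K / x) (at x)"
  unfolding volterra_def using K by (auto intro!: derivative_eq_intros simp: field_simps)

lemma volterra_nonneg: "x > 0 \<Longrightarrow> volterra K x \<ge> 0"
  using ln_le_minus_one[of "x / K"] K mult_left_mono[of "ln (x / K)" "x / K - 1" K]
  by (simp add: volterra_def right_diff_distrib)

lemma volterra_pos:
  assumes "x > 0" "x \<noteq> K"
  shows "volterra K x > 0"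
proof -
  have "ln (x / K) < x / K - 1"
  proof -
    have "x / K \<noteq> 1" using assms K by simp
    then have "ln (x / K) \<noteq> x / K - 1" using ln_eq_minus_one[of "x / K"] assms K by auto
    then show ?thesis using ln_le_minus_one[of "x / K"] assms K by simp
  qed
  then have "K * ln (x / K) < K * (x / K - 1)" using K by simp
  then show ?thesis using K by (simp add: volterra_def right_diff_distrib)
qed

lemma volterra_mono:
  assumes "K \<le> y" "y \<le> x"
  shows "volterra K y \<le> volterra K x"
proof -
  have "(\<lambda>x. - volterra K x) x - (\<lambda>x. - volterra K x) y \<le> 0 * (x - y)"
  proof (rule DERIV_le_imp_diff_le[OF \<open>y \<le> x\<close>, of _ "\<lambda>t. - (1 - K / t)"])
    show "continuous_on {y..x} (\<lambda>x. - volterra K x)"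
      using assms K
      by (intro continuous_on_minus DERIV_continuous_on[of _ _ "\<lambda>t. 1 - K / t"])
        (auto intro: has_field_derivative_at_within[OF volterra_has_derivative])
    fix t assume t: "y < t" "t < x"
    show "((\<lambda>x. - volterra K x) has_real_derivative - (1 - K / t)) (at t)"
      using t assms K by (intro DERIV_minus volterra_has_derivative) auto
    show "- (1 - K / t) \<le> 0" using t assms K by simp
  qed
  then show ?thesis by simp
qed

lemma volterra_antimono:
  assumes "0 < x" "x \<le> y" "y \<le> K"
  shows "volterra K y \<le> volterra K x"
proof -
  have "volterra K y - volterra K x \<le> 0 * (y - x)"
  proof (rule DERIV_le_imp_diff_le[OF \<open>x \<le> y\<close>, of _ "\<lambda>t. 1 - K / t"])
    show "continuous_on {x..y} (volterra K)"
      using assms K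
      by (intro DERIV_continuous_on[of _ _ "\<lambda>t. 1 - K / t"])
        (auto intro: has_field_derivative_at_within[OF volterra_has_derivative])
    fix t assume t: "x < t" "t < y"
    show "(volterra K has_real_derivative 1 - K / t) (at t)"
      using t assms by (intro volterra_has_derivative) auto
    show "1 - K / t \<le> 0" using t assms by simp
  qed
  then show ?thesis by simp
qed

lemma volterra_le_square: "x > 0 \<Longrightarrow> volterra K x \<le> (x - K)\<^sup>2 / x"
proof -
  assume x: "x > 0"
  have "K * ln (K / x) \<le> K * (K / x - 1)"
    using ln_le_minus_one[of "K / x"] K x by (intro mult_left_mono) auto
  moreover have "(x - K)\<^sup>2 / x = x - K + K * (K / x - 1)"
    using x by (simp add: field_simps power2_eq_square)
  moreover have "ln (x / K) = - ln (K / x)" using x K by (simp add: ln_div)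
  ultimately show ?thesis by (simp add: volterra_def)
qed

lemma volterra_ge_half: "x > 0 \<Longrightarrow> x / 2 - K \<le> volterra K x"
  using ln_le_half[of "x / K"] K mult_left_mono[of "ln (x / K)" "x / K / 2" K]
  by (simp add: volterra_def)

text \<open>\<open>volterra K\<close> decreases on \<open>]0, K]\<close> and increases on \<open>[K, \<infinity>[\<close>, so a small value of
  it confines \<open>x\<close> between the two points at distance \<open>min \<epsilon> (K/2)\<close> from \<open>K\<close>.\<close>
lemma volterra_sum_small_imp_close:
  assumes w: "w > 0" and e: "\<epsilon> > 0"
  obtains \<eta> where "\<eta> > 0"
    and "\<And>x y z. x > 0 \<Longrightarrow> y \<ge> 0 \<Longrightarrow> z \<ge> 0 \<Longrightarrow> volterra K x + y + w * z < \<eta> \<Longrightarrow>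
           \<bar>x - K\<bar> < \<epsilon> \<and> y < \<epsilon> \<and> z < \<epsilon>"
proof
  define e' where "e' = min \<epsilon> (K / 2)"
  have e': "0 < e'" "e' \<le> K / 2" "e' \<le> \<epsilon>" using e K by (auto simp: e'_def)
  define \<eta> where "\<eta> = min (min (volterra K (K + e')) (volterra K (K - e'))) (min \<epsilon> (w * \<epsilon>))"
  show "\<eta> > 0" using e' e w K by (simp add: \<eta>_def volterra_pos)
  fix x y z assume x: "x > 0" and yz: "y \<ge> 0" "z \<ge> 0" and small: "volterra K x + y + w * z < \<eta>"
  have parts: "volterra K x < \<eta>" "y < \<eta>" "w * z < \<eta>"
    using small volterra_nonneg[OF x] yz mult_nonneg_nonneg[of w z] w by linarith+
  have "\<not> K + e' \<le> x"
    using volterra_mono[of "K + e'" x] parts(1) e' by (auto simp: \<eta>_def)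
  moreover have "\<not> x \<le> K - e'"
    using volterra_antimono[of x "K - e'"] parts(1) e' x by (auto simp: \<eta>_def)
  moreover have "z < \<epsilon>" using parts(3) w by (simp add: \<eta>_def)
  ultimately show "\<bar>x - K\<bar> < \<epsilon> \<and> y < \<epsilon> \<and> z < \<epsilon>"
    using parts(2) e' by (auto simp: \<eta>_def)
qed

end

lemma T0_eq_pos:
  assumes "s > 0" "a > 0" "Tmax > 0"
  shows "T0_eq s d a Tmax > 0"
proof -
  have "\<bar>a - d\<bar> < sqrt ((a - d)\<^sup>2 + 4 * a * s / Tmax)"
    using assms by (subst real_sqrt_abs[symmetric]) (intro real_sqrt_less_mono, simp)
  then show ?thesis using assms by (simp add: T0_eq_def)
qed

lemma T0_eq_equilibrium:
  assumes "s \<ge> 0" "a > 0" "Tmax > 0"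
  shows "s - d * T0_eq s d a Tmax + a * T0_eq s d a Tmax * (1 - T0_eq s d a Tmax / Tmax) = 0"
proof -
  define r where "r = sqrt ((a - d)\<^sup>2 + 4 * a * s / Tmax)"
  have "r\<^sup>2 = (a - d)\<^sup>2 + 4 * a * s / Tmax" unfolding r_def using assms by simp
  then show ?thesis
    unfolding T0_eq_def r_def[symmetric] using assms
    by (simp add: field_simps power2_eq_square) algebra
qed

lemma nonpos_mult_ge_bound:
  fixes u k C :: real
  shows "u \<le> 0 \<Longrightarrow> \<bar>k\<bar> \<le> C \<Longrightarrow> C * u \<le> u * k"
  by (metis abs_le_D1 mult.commute mult_left_mono_neg)

text \<open>With \<open>K\<close> the infection-free equilibrium, the derivative of the Lyapunov functional equals
  the right-hand side plus \<open>(b p K / c + a (1 - K / Tmax) - \<mu>) y\<close>, and \<open>R0 \<le> 1\<close> says exactly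
  that this coefficient is nonpositive; \<open>w\<close> stands for the delayed incidence, which cancels.\<close>
lemma Lyapunov_rate_estimate:
  fixes s d a Tmax b \<alpha> \<mu> p c K x y z w :: real
  assumes K: "K > 0" and x: "x > 0" and z: "z \<ge> 0" and y: "y \<ge> 0" and Tmax: "Tmax > 0"
    and c: "c > 0" and \<alpha>: "\<alpha> > 0"
    and equilibrium: "s - d * K + a * K * (1 - K / Tmax) = 0"
    and R0: "b * p * K / c + a * (1 - K / Tmax) \<le> \<mu>"
  shows "(1 - K / x) * (s - d * x + a * x * (1 - (x + y) / Tmax) - b * x * z / (1 + \<alpha> * z))
       + (w + a * y * (1 - (x + y) / Tmax) - \<mu> * y) + b * K / c * (p * y - c * z)
       + (b * x * z / (1 + \<alpha> * z) - w)
       \<le> - (a / Tmax) * (x - K + y)\<^sup>2 - s * (x - K)\<^sup>2 / (K * x) - b * K * \<alpha> * z\<^sup>2 / (1 + \<alpha> * z)"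
proof -
  have s: "s = d * K - a * K * (1 - K / Tmax)" using equilibrium by linarith
  have den: "1 + \<alpha> * z > 0" using \<alpha> z by (simp add: add_pos_nonneg)
  define h where "h = b * z / (1 + \<alpha> * z)"
  have e1: "b * x * z / (1 + \<alpha> * z) = x * h" by (simp add: h_def)
  have e2: "b * K * \<alpha> * z\<^sup>2 / (1 + \<alpha> * z) = b * K * z - K * h"
    using den by (simp add: h_def field_simps power2_eq_square)
  have e3: "(1 - K / x) * (s - d * x + a * x * (1 - x / Tmax))
      = - s * (x - K)\<^sup>2 / (K * x) - (a / Tmax) * (x - K)\<^sup>2"
    unfolding s using K x Tmax by (simp add: field_simps power2_eq_square)
  have e4: "(1 - K / x) * (s - d * x + a * x * (1 - (x + y) / Tmax) - x * h)
      = (1 - K / x) * (s - d * x + a * x * (1 - x / Tmax)) - (x - K) * a * y / Tmax - x * h + K * h"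
    using x Tmax by (simp add: field_simps)
  have "(1 - K / x) * (s - d * x + a * x * (1 - (x + y) / Tmax) - b * x * z / (1 + \<alpha> * z))
       + (w + a * y * (1 - (x + y) / Tmax) - \<mu> * y) + b * K / c * (p * y - c * z)
       + (b * x * z / (1 + \<alpha> * z) - w)
       = - (a / Tmax) * (x - K + y)\<^sup>2 - s * (x - K)\<^sup>2 / (K * x) - b * K * \<alpha> * z\<^sup>2 / (1 + \<alpha> * z)
         + (b * p * K / c + a * (1 - K / Tmax) - \<mu>) * y"
    unfolding e1 e2 e4 e3 using Tmax c K x by (simp add: field_simps power2_eq_square)
  moreover have "(b * p * K / c + a * (1 - K / Tmax) - \<mu>) * y \<le> 0"
    using R0 y by (simp add: mult_nonpos_nonneg)
  ultimately show ?thesis by linarith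
qed

lemma logistic_term_bound:
  fixes a Tmax x y w B :: real
  assumes "a > 0" "Tmax > 0" "0 \<le> x" "x \<le> B" "0 \<le> y" "y \<le> B" "0 \<le> w" "w \<le> B"
  shows "\<bar>a * x * (1 - (y + w) / Tmax)\<bar> \<le> a * B * (1 + 2 * B / Tmax)"
proof -
  have "(y + w) / Tmax \<le> 2 * B / Tmax" "(y + w) / Tmax \<ge> 0"
    using assms by (auto intro: divide_right_mono)
  then have "\<bar>1 - (y + w) / Tmax\<bar> \<le> 1 + 2 * B / Tmax" by (simp add: abs_le_iff)
  then show ?thesis
    using assms by (simp add: abs_mult mult_mono)
qed

locale infection_model =
  fixes s d a Tmax b \<alpha> \<mu> p c \<tau> :: real
  assumes s: "s > 0" and d: "d > 0" and a: "a > 0" and Tmax: "Tmax > 0" and b: "b > 0"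
    and \<alpha>: "\<alpha> > 0" and \<mu>: "\<mu> > 0" and p: "p > 0" and c: "c > 0" and \<tau>: "\<tau> \<ge> 0"
begin

abbreviation Teq :: real where "Teq \<equiv> T0_eq s d a Tmax"

lemma Teq_pos: "Teq > 0"
  using T0_eq_pos s a Tmax by blast

lemma Teq_equilibrium: "s - d * Teq + a * Teq * (1 - Teq / Tmax) = 0"
  using T0_eq_equilibrium s a Tmax by simp

end

locale infection_solution = infection_model +
  fixes T I V :: "real \<Rightarrow> real"
  assumes solution: "is_solution s d a Tmax b \<alpha> \<mu> p c \<tau> T I V"
begin

definition incidence :: "real \<Rightarrow> real" where
  "incidence t = b * T t * V t / (1 + \<alpha> * V t)"

definition T_rate :: "real \<Rightarrow> real" where
  "T_rate t = s - d * T t + a * T t * (1 - (T t + I t) / Tmax) - incidence t"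

definition I_rate :: "real \<Rightarrow> real" where
  "I_rate t = incidence (t - \<tau>) + a * I t * (1 - (T t + I t) / Tmax) - \<mu> * I t"

definition V_rate :: "real \<Rightarrow> real" where
  "V_rate t = p * I t - c * V t"

lemma initial_nonneg: "t \<in> {-\<tau>..0} \<Longrightarrow> T t \<ge> 0 \<and> I t \<ge> 0 \<and> V t \<ge> 0"
  using solution unfolding is_solution_def by blast

lemma T_cont: "continuous_on {-\<tau>..} T"
  and I_cont: "continuous_on {-\<tau>..} I"
  and V_cont: "continuous_on {-\<tau>..} V"
  using solution unfolding is_solution_def by blast+

lemma
  assumes "t > 0"
  shows T_deriv: "(T has_real_derivative T_rate t) (at t)"
    and I_deriv: "(I has_real_derivative I_rate t) (at t)"
    and V_deriv: "(V has_real_derivative V_rate t) (at t)"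
proof -
  have "at t within {0..} = at t"
    by (rule at_within_interior) (use assms in \<open>simp add: interior_real_atLeast\<close>)
  moreover have "(T has_real_derivative T_rate t) (at t within {0..}) \<and>
      (I has_real_derivative I_rate t) (at t within {0..}) \<and>
      (V has_real_derivative V_rate t) (at t within {0..})"
    using solution assms unfolding is_solution_def T_rate_def I_rate_def V_rate_def incidence_def
    by (auto dest: spec[of _ t])
  ultimately show "(T has_real_derivative T_rate t) (at t)"
    "(I has_real_derivative I_rate t) (at t)" "(V has_real_derivative V_rate t) (at t)"
    by simp_all
qed

lemma rates_bounded_near:
  assumes "ts \<ge> 0" "V ts \<ge> 0"
  obtains \<eta> C where "\<eta> > 0" "C \<ge> 0"
    and "\<And>u. u \<in> {ts..ts + \<eta>} \<Longrightarrow> 1 + \<alpha> * V u > 0"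
    and "\<And>u. u \<in> {ts..ts + \<eta>} \<Longrightarrow> \<bar>a * (1 - (T u + I u) / Tmax)\<bar> \<le> C"
    and "\<And>u. u \<in> {ts..ts + \<eta>} \<Longrightarrow> \<bar>b * V u / (1 + \<alpha> * V u)\<bar> \<le> C"
    and "\<And>u. u \<in> {ts..ts + \<eta>} \<Longrightarrow> \<bar>b * T u / (1 + \<alpha> * V u)\<bar> \<le> C"
proof -
  obtain \<eta> where \<eta>: "\<eta> > 0"
    and close: "\<And>u. u \<in> {-\<tau>..} \<Longrightarrow> dist u ts < \<eta> \<Longrightarrow> dist (V u) (V ts) < 1 / \<alpha>"
  proof -
    have "ts \<in> {-\<tau>..}" "1 / \<alpha> > 0" using assms(1) \<tau> \<alpha> by auto
    then show ?thesis using that V_cont unfolding continuous_on_iff by blast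
  qed
  define J where "J = {ts..ts + \<eta> / 2}"
  have J: "J \<subseteq> {-\<tau>..}" "compact J" "J \<noteq> {}" using assms \<tau> \<eta> by (auto simp: J_def)
  have denominator: "1 + \<alpha> * V u > 0" if "u \<in> J" for u
  proof -
    have "dist u ts < \<eta>" using that \<eta> by (auto simp: J_def dist_real_def)
    then have "V u > - (1 / \<alpha>)" using close[of u] that J(1) assms(2) by (auto simp: dist_real_def)
    then show ?thesis using \<alpha> by (simp add: field_simps)
  qed
  define f1 where "f1 u = a * (1 - (T u + I u) / Tmax)" for u
  define f2 where "f2 u = b * V u / (1 + \<alpha> * V u)" for u
  define f3 where "f3 u = b * T u / (1 + \<alpha> * V u)" for u
  define F where "F u = \<bar>f1 u\<bar> + \<bar>f2 u\<bar> + \<bar>f3 u\<bar>" for u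
  have "continuous_on J T" "continuous_on J I" "continuous_on J V"
    using J(1) T_cont I_cont V_cont continuous_on_subset by blast+
  then have "continuous_on J F"
    unfolding F_def f1_def f2_def f3_def using denominator Tmax
    by (intro continuous_intros) (auto simp: less_imp_neq[symmetric])
  then obtain m where m: "m \<in> J" "\<And>u. u \<in> J \<Longrightarrow> F u \<le> F m"
    using continuous_attains_sup[OF J(2,3)] by blast
  have "\<bar>f1 u\<bar> \<le> F m \<and> \<bar>f2 u\<bar> \<le> F m \<and> \<bar>f3 u\<bar> \<le> F m" if "u \<in> {ts..ts + \<eta> / 2}" for u
  proof -
    have "F u \<le> F m" using m(2)[of u] that by (simp add: J_def)
    then show ?thesis
      using abs_ge_zero[of "f1 u"] abs_ge_zero[of "f2 u"] abs_ge_zero[of "f3 u"]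
      unfolding F_def by linarith
  qed
  then show ?thesis
    using that[of "\<eta> / 2" "F m"] \<eta> denominator unfolding F_def f1_def f2_def f3_def J_def by auto
qed

definition negative_part :: "real \<Rightarrow> real" where
  "negative_part t = max 0 (- T t) + max 0 (- I t) + max 0 (- V t)"

lemma negative_part:
  "negative_part t \<ge> 0" "- negative_part t \<le> T t" "- negative_part t \<le> I t"
  "- negative_part t \<le> V t"
  by (auto simp: negative_part_def)

lemma incidence_ge_negative_part:
  assumes "C \<ge> 0" "1 + \<alpha> * V t > 0"
    and "\<bar>b * V t / (1 + \<alpha> * V t)\<bar> \<le> C" "\<bar>b * T t / (1 + \<alpha> * V t)\<bar> \<le> C"
  shows "incidence t \<ge> - C * negative_part t"
proof -
  have CN: "- C * negative_part t \<le> C * T t" "- C * negative_part t \<le> C * V t"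
    using mult_left_mono[OF negative_part(2) \<open>C \<ge> 0\<close>] mult_left_mono[OF negative_part(4) \<open>C \<ge> 0\<close>]
    by simp_all
  consider "T t < 0" | "V t < 0" | "T t \<ge> 0" "V t \<ge> 0" by linarith
  then show ?thesis
  proof cases
    case 1
    have "incidence t = T t * (b * V t / (1 + \<alpha> * V t))" by (simp add: incidence_def)
    then show ?thesis using nonpos_mult_ge_bound[OF _ assms(3), of "T t"] 1 CN by simp
  next
    case 2
    have "incidence t = V t * (b * T t / (1 + \<alpha> * V t))" by (simp add: incidence_def)
    then show ?thesis using nonpos_mult_ge_bound[OF _ assms(4), of "V t"] 2 CN by simp
  next
    case 3
    then have "incidence t \<ge> 0" using assms(2) b by (simp add: incidence_def)
    then show ?thesis using mult_nonneg_nonneg[OF \<open>C \<ge> 0\<close> negative_part(1)[of t]] by linarith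
  qed
qed

lemma T_rate_ge_negative_part:
  assumes "d + 2 * C \<le> K" and "T t < 0"
    and "\<bar>a * (1 - (T t + I t) / Tmax)\<bar> \<le> C" "\<bar>b * V t / (1 + \<alpha> * V t)\<bar> \<le> C"
  shows "T_rate t \<ge> - K * negative_part t"
proof -
  have "\<bar>- d + a * (1 - (T t + I t) / Tmax) - b * V t / (1 + \<alpha> * V t)\<bar> \<le> K"
    using abs_le_D1[OF assms(3)] abs_le_D2[OF assms(3)] abs_le_D1[OF assms(4)]
      abs_le_D2[OF assms(4)] d assms(1)
    unfolding abs_le_iff by (intro conjI) linarith+
  then have "K * T t \<le> T t * (- d + a * (1 - (T t + I t) / Tmax) - b * V t / (1 + \<alpha> * V t))"
    using \<open>T t < 0\<close> by (intro nonpos_mult_ge_bound) auto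
  moreover have "T_rate t
      = s + T t * (- d + a * (1 - (T t + I t) / Tmax) - b * V t / (1 + \<alpha> * V t))"
    unfolding T_rate_def incidence_def by (simp add: algebra_simps)
  moreover have "K \<ge> 0" using assms(1,3) d by linarith
  then have "- K * negative_part t \<le> K * T t" using mult_left_mono[OF negative_part(2)] by simp
  ultimately show ?thesis using s by linarith
qed

lemma I_rate_ge_negative_part:
  assumes "\<mu> + C \<le> K" and "I t < 0" and "\<bar>a * (1 - (T t + I t) / Tmax)\<bar> \<le> C"
    and delayed: "incidence (t - \<tau>) \<ge> - K * negative_part t"
  shows "I_rate t \<ge> - (2 * K) * negative_part t"
proof -
  have "\<bar>a * (1 - (T t + I t) / Tmax) - \<mu>\<bar> \<le> K"
    using abs_le_D1[OF assms(3)] abs_le_D2[OF assms(3)] \<mu> assms(1)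
    unfolding abs_le_iff by (intro conjI) linarith+
  then have "K * I t \<le> I t * (a * (1 - (T t + I t) / Tmax) - \<mu>)"
    using \<open>I t < 0\<close> by (intro nonpos_mult_ge_bound) auto
  moreover have "I_rate t = incidence (t - \<tau>) + I t * (a * (1 - (T t + I t) / Tmax) - \<mu>)"
    unfolding I_rate_def by (simp add: algebra_simps)
  moreover have "K \<ge> 0" using assms(1,3) \<mu> by linarith
  then have "- K * negative_part t \<le> K * I t" using mult_left_mono[OF negative_part(3)] by simp
  ultimately show ?thesis using delayed by linarith
qed

lemma V_rate_ge_negative_part:
  assumes "p \<le> K" and "V t < 0"
  shows "V_rate t \<ge> - K * negative_part t"
proof -
  have "c * V t < 0" using \<open>V t < 0\<close> c by (simp add: mult_pos_neg)
  moreover have "- p * negative_part t \<le> p * I t"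
    using mult_left_mono[OF negative_part(3)] p by simp
  moreover have "- K * negative_part t \<le> - p * negative_part t"
    using \<open>p \<le> K\<close> negative_part(1) by (simp add: mult_right_mono)
  ultimately show ?thesis unfolding V_rate_def by linarith
qed

lemma state_nonneg_on_short_interval:
  assumes "ts \<ge> 0" "K \<ge> 0" "3 * K * h < 1" "h \<ge> 0"
    and start: "T ts \<ge> 0" "I ts \<ge> 0" "V ts \<ge> 0"
    and lower: "\<And>t. ts < t \<Longrightarrow> t < ts + h \<Longrightarrow>
      (T t < 0 \<longrightarrow> T_rate t \<ge> - K * negative_part t) \<and> (I t < 0 \<longrightarrow> I_rate t \<ge> - K * negative_part t)
      \<and> (V t < 0 \<longrightarrow> V_rate t \<ge> - K * negative_part t)"
    and "u \<in> {ts..ts + h}"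
  shows "T u \<ge> 0 \<and> I u \<ge> 0 \<and> V u \<ge> 0"
proof -
  define x :: "nat \<Rightarrow> real \<Rightarrow> real" where "x i = (if i = 0 then T else if i = 1 then I else V)" for i
  define x' :: "nat \<Rightarrow> real \<Rightarrow> real"
    where "x' i = (if i = 0 then T_rate else if i = 1 then I_rate else V_rate)" for i
  have "{ts..ts + h} \<subseteq> {-\<tau>..}" using assms(1) \<tau> by auto
  then have "continuous_on {ts..ts + h} T" "continuous_on {ts..ts + h} I"
    "continuous_on {ts..ts + h} V"
    using T_cont I_cont V_cont continuous_on_subset by blast+
  have "x i u \<ge> 0" if "i \<in> {0, 1, 2}" for i
  proof (rule nonneg_if_deriv_ge_neg_parts[where S = "{0, 1, 2}" and a = ts and b = "ts + h"
        and C = K and x = x and x' = x', OF _ _ \<open>K \<ge> 0\<close>])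
    show "(x i has_real_derivative x' i t) (at t)" if "i \<in> {0, 1, 2}" "ts < t" "t < ts + h" for i t
      using T_deriv I_deriv V_deriv that assms(1) by (auto simp: x_def x'_def)
    show "x' i t \<ge> - K * (\<Sum>j\<in>{0,1,2}. max 0 (- x j t))"
      if "i \<in> {0, 1, 2}" "ts < t" "t < ts + h" "x i t < 0" for i t
    proof -
      have "(\<Sum>j\<in>{0,1,2}. max 0 (- x j t)) = negative_part t" by (simp add: x_def negative_part_def)
      then show ?thesis using lower[of t] that by (auto simp: x_def x'_def)
    qed
    show "continuous_on {ts..ts + h} (x i)" if "i \<in> {0, 1, 2}" for i
      using that \<open>continuous_on {ts..ts + h} T\<close> \<open>continuous_on {ts..ts + h} I\<close>
        \<open>continuous_on {ts..ts + h} V\<close> by (auto simp: x_def)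
  qed (use assms(3,4) start that \<open>u \<in> {ts..ts + h}\<close> in \<open>auto simp: x_def\<close>)
  from this[of 0] this[of 1] this[of 2] show ?thesis by (simp add: x_def)
qed

text \<open>For \<open>\<tau> > 0\<close> the interval is chosen shorter than the delay, so that the delayed
  incidence is nonnegative.\<close>
lemma state_nonneg_extends:
  assumes ts: "ts \<ge> 0" and nonneg: "\<And>u. u \<in> {-\<tau>..ts} \<Longrightarrow> T u \<ge> 0 \<and> I u \<ge> 0 \<and> V u \<ge> 0"
  shows "\<exists>h>0. \<forall>u\<in>{ts..ts + h}. T u \<ge> 0 \<and> I u \<ge> 0 \<and> V u \<ge> 0"
proof -
  obtain \<eta> C where \<eta>: "\<eta> > 0" and C: "C \<ge> 0"
    and den: "\<And>u. u \<in> {ts..ts + \<eta>} \<Longrightarrow> 1 + \<alpha> * V u > 0"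
    and f1: "\<And>u. u \<in> {ts..ts + \<eta>} \<Longrightarrow> \<bar>a * (1 - (T u + I u) / Tmax)\<bar> \<le> C"
    and f2: "\<And>u. u \<in> {ts..ts + \<eta>} \<Longrightarrow> \<bar>b * V u / (1 + \<alpha> * V u)\<bar> \<le> C"
    and f3: "\<And>u. u \<in> {ts..ts + \<eta>} \<Longrightarrow> \<bar>b * T u / (1 + \<alpha> * V u)\<bar> \<le> C"
    using rates_bounded_near[OF ts] nonneg[of ts] ts \<tau> by auto
  define K where "K = d + \<mu> + p + 2 * C"
  have K: "K > 0" "C \<le> K" using d \<mu> p C by (simp_all add: K_def)
  define h where "h = min (min \<eta> (if \<tau> > 0 then \<tau> else \<eta>)) (1 / (8 * K))"
  have h: "h > 0" "h \<le> \<eta>" "\<tau> > 0 \<Longrightarrow> h \<le> \<tau>" using \<eta> K by (auto simp: h_def)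
  have "h \<le> 1 / (8 * K)" by (simp add: h_def)
  then have short: "3 * (2 * K) * h < 1" using K by (simp add: field_simps)
  have delayed: "- K * negative_part t \<le> incidence (t - \<tau>)" if "t \<in> {ts..ts + h}" for t
  proof (cases "\<tau> > 0")
    case True
    then have "incidence (t - \<tau>) \<ge> 0"
      using nonneg[of "t - \<tau>"] that h b \<alpha> ts by (simp add: incidence_def)
    then show ?thesis
      using mult_nonneg_nonneg[OF less_imp_le[OF K(1)] negative_part(1)[of t]] by linarith
  next
    case False
    then have "incidence t \<ge> - C * negative_part t"
      using that h by (intro incidence_ge_negative_part C den f2 f3) auto
    moreover have "- K * negative_part t \<le> - C * negative_part t"
      using K(2) negative_part(1)[of t] by (simp add: mult_right_mono)
    ultimately show ?thesis using False \<tau> by simp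
  qed
  have lower: "(T t < 0 \<longrightarrow> T_rate t \<ge> - (2 * K) * negative_part t)
      \<and> (I t < 0 \<longrightarrow> I_rate t \<ge> - (2 * K) * negative_part t)
      \<and> (V t < 0 \<longrightarrow> V_rate t \<ge> - (2 * K) * negative_part t)" if "ts < t" "t < ts + h" for t
  proof (intro conjI impI)
    have t: "t \<in> {ts..ts + \<eta>}" "t \<in> {ts..ts + h}" using that h by auto
    have le: "- (2 * K) * negative_part t \<le> - K * negative_part t"
      using K negative_part(1)[of t] by simp
    have "d + 2 * C \<le> K" "\<mu> + C \<le> K" "p \<le> K" using d \<mu> p C by (simp_all add: K_def)
    note bounds = this f1[OF t(1)] f2[OF t(1)]
    show "T_rate t \<ge> - (2 * K) * negative_part t" if "T t < 0"
      using T_rate_ge_negative_part[OF bounds(1) that bounds(4,5)] le by linarith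
    show "I_rate t \<ge> - (2 * K) * negative_part t" if "I t < 0"
      using I_rate_ge_negative_part[OF bounds(2) that bounds(4) delayed[OF t(2)]] .
    show "V_rate t \<ge> - (2 * K) * negative_part t" if "V t < 0"
      using V_rate_ge_negative_part[OF bounds(3) that] le by linarith
  qed
  have "T u \<ge> 0 \<and> I u \<ge> 0 \<and> V u \<ge> 0" if "u \<in> {ts..ts + h}" for u
    using nonneg[of ts] ts \<tau> h K short lower that
    by (intro state_nonneg_on_short_interval[of ts "2 * K" h]) auto
  then show ?thesis using h(1) by blast
qed

lemma state_nonneg:
  assumes "t \<ge> -\<tau>"
  shows "T t \<ge> 0 \<and> I t \<ge> 0 \<and> V t \<ge> 0"
proof (cases "t \<le> 0")
  case True
  then show ?thesis using initial_nonneg assms by simp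
next
  case False
  show ?thesis
  proof (rule continuous_induction[where a = 0 and P = "\<lambda>t. T t \<ge> 0 \<and> I t \<ge> 0 \<and> V t \<ge> 0"])
    fix t1 :: real assume t1: "t1 \<ge> 0" and before: "\<forall>u\<in>{0..<t1}. T u \<ge> 0 \<and> I u \<ge> 0 \<and> V u \<ge> 0"
    show "T t1 \<ge> 0 \<and> I t1 \<ge> 0 \<and> V t1 \<ge> 0"
    proof (cases "t1 = 0")
      case True
      then show ?thesis using initial_nonneg \<tau> by simp
    next
      case False
      then have closure: "closure {0..<t1} = {0..t1}" "t1 \<in> closure {0..<t1}" using t1 by auto
      have sub: "{0..t1} \<subseteq> {-\<tau>..}" using \<tau> by auto
      have "continuous_on (closure {0..<t1}) f" if "f \<in> {T, I, V}" for f
        using that T_cont I_cont V_cont unfolding closure(1)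
        by (auto intro: continuous_on_subset[OF _ sub])
      then show ?thesis
        using continuous_ge_on_closure[OF _ closure(2), of _ 0] before by auto
    qed
  next
    fix t1 :: real assume "t1 \<ge> 0" and "\<forall>u\<in>{0..t1}. T u \<ge> 0 \<and> I u \<ge> 0 \<and> V u \<ge> 0"
    then show "\<exists>h>0. \<forall>u\<in>{t1..t1 + h}. T u \<ge> 0 \<and> I u \<ge> 0 \<and> V u \<ge> 0"
      using initial_nonneg by (intro state_nonneg_extends) (auto simp: not_le)
  qed (use False in simp)
qed

lemma T_pos:
  assumes "t > 0"
  shows "T t > 0"
proof (rule ccontr)
  assume "\<not> T t > 0"
  then have "T t = 0" using state_nonneg[of t] assms \<tau> by simp
  text \<open>A zero of the nonnegative function \<open>T\<close> is a local minimum, yet \<open>T_rate t = s > 0\<close>.\<close>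
  have "T_rate t = 0"
  proof (rule DERIV_local_min[OF T_deriv[OF assms] assms])
    show "\<forall>y. \<bar>t - y\<bar> < t \<longrightarrow> T t \<le> T y"
      using state_nonneg \<open>T t = 0\<close> \<tau> by (smt (verit))
  qed
  then show False using \<open>T t = 0\<close> s by (simp add: T_rate_def incidence_def)
qed

lemma incidence_nonneg: "t \<ge> -\<tau> \<Longrightarrow> incidence t \<ge> 0"
  using state_nonneg[of t] b \<alpha> by (simp add: incidence_def)

lemma incidence_cont: "continuous_on {-\<tau>..} incidence"
proof -
  have "1 + \<alpha> * V t \<noteq> 0" if "t \<in> {-\<tau>..}" for t
    using state_nonneg[of t] that \<alpha> by (smt (verit) mult_nonneg_nonneg atLeast_iff)
  then show ?thesis
    unfolding incidence_def using T_cont V_cont by (intro continuous_intros) auto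
qed

definition cumulative_incidence :: "real \<Rightarrow> real" where
  "cumulative_incidence t = integral {-\<tau>..t} incidence"

definition delay_term :: "real \<Rightarrow> real" where
  "delay_term t = cumulative_incidence t - cumulative_incidence (t - \<tau>)"

lemma cumulative_incidence_has_derivative_within:
  assumes "t \<ge> -\<tau>"
  shows "(cumulative_incidence has_real_derivative incidence t) (at t within {-\<tau>..})"
proof -
  have "(cumulative_incidence has_real_derivative incidence t) (at t within {-\<tau>..t + 1})"
    unfolding cumulative_incidence_def using assms
    by (intro integral_has_real_derivative continuous_on_subset[OF incidence_cont]) auto
  moreover have "at t within {-\<tau>..t + 1} = at t within {-\<tau>..}"
    by (rule at_within_nhd[of _ "{..<t + 1}"]) auto
  ultimately show ?thesis by simp
qed

lemma cumulative_incidence_cont: "continuous_on {-\<tau>..} cumulative_incidence"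
  using cumulative_incidence_has_derivative_within by (intro DERIV_continuous_on) auto

lemma cumulative_incidence_has_derivative:
  "t > -\<tau> \<Longrightarrow> (cumulative_incidence has_real_derivative incidence t) (at t)"
  using cumulative_incidence_has_derivative_within[of t]
    at_within_interior[of t "{-\<tau>..}"] by (simp add: interior_real_atLeast)

lemma delay_term_has_derivative:
  "t > 0 \<Longrightarrow> (delay_term has_real_derivative incidence t - incidence (t - \<tau>)) (at t)"
  unfolding delay_term_def using \<tau>
  by (auto intro!: derivative_eq_intros cumulative_incidence_has_derivative
      DERIV_chain2[OF cumulative_incidence_has_derivative])

lemma delay_term_cont: "continuous_on {0..} delay_term"
proof -
  have "continuous_on {0..} cumulative_incidence"
    by (rule continuous_on_subset[OF cumulative_incidence_cont]) (use \<tau> in auto)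
  moreover have "continuous_on {0..} (\<lambda>t. cumulative_incidence (t - \<tau>))"
    by (rule continuous_on_compose2[OF cumulative_incidence_cont]) (auto intro!: continuous_intros)
  ultimately show ?thesis unfolding delay_term_def by (intro continuous_intros)
qed

lemma delay_term_eq_integral: "t \<ge> 0 \<Longrightarrow> delay_term t = integral {t - \<tau>..t} incidence"
proof -
  assume "t \<ge> 0"
  have "incidence integrable_on {-\<tau>..t}"
    by (intro integrable_continuous_real continuous_on_subset[OF incidence_cont]) auto
  then have "integral {-\<tau>..t - \<tau>} incidence + integral {t - \<tau>..t} incidence
      = integral {-\<tau>..t} incidence"
    using \<open>t \<ge> 0\<close> \<tau> by (intro Henstock_Kurzweil_Integration.integral_combine) auto
  then show ?thesis unfolding delay_term_def cumulative_incidence_def by simp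
qed

lemma delay_term_nonneg: "t \<ge> 0 \<Longrightarrow> delay_term t \<ge> 0"
  using incidence_nonneg
  by (auto simp: delay_term_eq_integral intro!: Henstock_Kurzweil_Integration.integral_nonneg
      integrable_continuous_real continuous_on_subset[OF incidence_cont])

lemma delay_term_0_le:
  assumes "\<And>t. t \<in> {-\<tau>..0} \<Longrightarrow> incidence t \<le> m"
  shows "delay_term 0 \<le> \<tau> * m"
proof -
  have "integral {-\<tau>..0} incidence \<le> integral {-\<tau>..0} (\<lambda>_. m)"
    using assms
    by (intro integral_le integrable_continuous_real continuous_on_subset[OF incidence_cont]) auto
  then show ?thesis using \<tau> by (simp add: delay_term_eq_integral)
qed

definition lyapunov :: "real \<Rightarrow> real" where
  "lyapunov t = volterra Teq (T t) + I t + b * Teq / c * V t + delay_term t"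

definition lyapunov_rate :: "real \<Rightarrow> real" where
  "lyapunov_rate t = (1 - Teq / T t) * T_rate t + I_rate t + b * Teq / c * V_rate t
     + (incidence t - incidence (t - \<tau>))"

lemma lyapunov_nonneg: "t \<ge> 0 \<Longrightarrow> T t > 0 \<Longrightarrow> lyapunov t \<ge> 0"
  using volterra_nonneg[OF Teq_pos, of "T t"] state_nonneg[of t] delay_term_nonneg[of t]
    \<tau> b c Teq_pos unfolding lyapunov_def by simp

lemma lyapunov_has_derivative:
  "t > 0 \<Longrightarrow> (lyapunov has_real_derivative lyapunov_rate t) (at t)"
  unfolding lyapunov_def lyapunov_rate_def
  by (intro DERIV_add DERIV_cmult DERIV_chain2[OF volterra_has_derivative[OF Teq_pos]] T_deriv
      I_deriv V_deriv delay_term_has_derivative T_pos)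

lemma lyapunov_cont:
  assumes "t0 \<ge> 0" "T t0 > 0"
  shows "continuous_on {t0..} lyapunov"
proof -
  have pos: "T t > 0" if "t \<in> {t0..}" for t
    using assms T_pos[of t] that by (cases "t = t0") auto
  have "{t0..} \<subseteq> {-\<tau>..}" "{t0..} \<subseteq> {0..}" using assms \<tau> by auto
  then have "continuous_on {t0..} T" "continuous_on {t0..} I" "continuous_on {t0..} V"
    "continuous_on {t0..} delay_term"
    using T_cont I_cont V_cont delay_term_cont continuous_on_subset by blast+
  then show ?thesis
    unfolding lyapunov_def volterra_def using pos Teq_pos
    by (intro continuous_intros) (auto simp: less_imp_neq[symmetric])
qed

lemma lyapunov_rate_le:
  assumes "t > 0" and R0: "R0_num s d a Tmax b \<mu> p c \<le> 1"
  shows "lyapunov_rate t \<le> - (a / Tmax) * (T t - Teq + I t)\<^sup>2"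
    and "lyapunov_rate t \<le> - (s / (Teq * T t)) * (T t - Teq)\<^sup>2"
    and "lyapunov_rate t \<le> - (b * Teq * \<alpha> / (1 + \<alpha> * V t)) * (V t)\<^sup>2"
proof -
  have "b * p * Teq / c + a * (1 - Teq / Tmax) \<le> \<mu>"
    using R0 \<mu> by (simp add: R0_num_def field_simps)
  then have "lyapunov_rate t \<le> - (a / Tmax) * (T t - Teq + I t)\<^sup>2
      - s * (T t - Teq)\<^sup>2 / (Teq * T t) - b * Teq * \<alpha> * (V t)\<^sup>2 / (1 + \<alpha> * V t)"
    unfolding lyapunov_rate_def T_rate_def I_rate_def V_rate_def incidence_def
    using Lyapunov_rate_estimate[OF Teq_pos T_pos[OF \<open>t > 0\<close>] _ _ Tmax c \<alpha> Teq_equilibrium]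
      state_nonneg[of t] \<open>t > 0\<close> \<tau>
    by simp
  moreover have "s * (T t - Teq)\<^sup>2 / (Teq * T t) = (s / (Teq * T t)) * (T t - Teq)\<^sup>2"
    "b * Teq * \<alpha> * (V t)\<^sup>2 / (1 + \<alpha> * V t) = (b * Teq * \<alpha> / (1 + \<alpha> * V t)) * (V t)\<^sup>2"
    by simp_all
  moreover have "(s / (Teq * T t)) * (T t - Teq)\<^sup>2 \<ge> 0"
    "(b * Teq * \<alpha> / (1 + \<alpha> * V t)) * (V t)\<^sup>2 \<ge> 0" "(a / Tmax) * (T t - Teq + I t)\<^sup>2 \<ge> 0"
    using s Teq_pos T_pos[OF \<open>t > 0\<close>] b \<alpha> a Tmax state_nonneg[of t] \<open>t > 0\<close> \<tau> by simp_all
  ultimately show "lyapunov_rate t \<le> - (a / Tmax) * (T t - Teq + I t)\<^sup>2"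
    and "lyapunov_rate t \<le> - (s / (Teq * T t)) * (T t - Teq)\<^sup>2"
    and "lyapunov_rate t \<le> - (b * Teq * \<alpha> / (1 + \<alpha> * V t)) * (V t)\<^sup>2"
    by linarith+
qed

lemma lyapunov_antimono:
  assumes R0: "R0_num s d a Tmax b \<mu> p c \<le> 1" and "x \<ge> 0" "T x > 0" "x \<le> y"
  shows "lyapunov y \<le> lyapunov x"
proof -
  have "lyapunov y - lyapunov x \<le> 0 * (y - x)"
  proof (rule DERIV_le_imp_diff_le[OF \<open>x \<le> y\<close> _ lyapunov_has_derivative])
    show "continuous_on {x..y} lyapunov"
      by (rule continuous_on_subset[OF lyapunov_cont[of x]]) (use assms in auto)
    fix t assume "x < t"
    then show "lyapunov_rate t \<le> 0"
    proof -
      have "(a / Tmax) * (T t - Teq + I t)\<^sup>2 \<ge> 0" using a Tmax by simp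
      then show ?thesis using lyapunov_rate_le(1)[OF _ R0, of t] \<open>x < t\<close> assms by linarith
    qed
  qed (use assms in auto)
  then show ?thesis by simp
qed

lemma incidence_le: "t \<ge> -\<tau> \<Longrightarrow> incidence t \<le> b * T t * V t"
proof -
  assume "t \<ge> -\<tau>"
  then have "b * T t * V t \<ge> 0" "1 \<le> 1 + \<alpha> * V t" using state_nonneg[of t] b \<alpha> by simp_all
  then have "b * T t * V t / (1 + \<alpha> * V t) \<le> b * T t * V t / 1" by (intro divide_left_mono) auto
  then show ?thesis by (simp add: incidence_def)
qed

lemma lyapunov_0_less:
  assumes "\<delta> > 0" "\<delta> \<le> Teq / 2"
    and close: "\<And>t. t \<in> {-\<tau>..0} \<Longrightarrow> \<bar>T t - Teq\<bar> < \<delta> \<and> \<bar>I t\<bar> < \<delta> \<and> \<bar>V t\<bar> < \<delta>"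
  shows "lyapunov 0 < (2 + b * Teq / c + 2 * \<tau> * b * Teq) * \<delta>"
proof -
  have close0: "\<bar>T 0 - Teq\<bar> < \<delta>" "\<bar>I 0\<bar> < \<delta>" "\<bar>V 0\<bar> < \<delta>" using close[of 0] \<tau> by auto
  then have T0: "T 0 \<ge> Teq / 2" using assms by linarith
  have "volterra Teq (T 0) \<le> (T 0 - Teq)\<^sup>2 / T 0"
    using volterra_le_square[OF Teq_pos] T0 Teq_pos by simp
  also have "\<dots> \<le> \<delta>\<^sup>2 / (Teq / 2)"
    using close0(1) T0 Teq_pos \<open>\<delta> > 0\<close>
    by (intro frac_le) (auto simp: abs_le_square_iff[symmetric] less_imp_le)
  also have "\<dots> \<le> \<delta>" using assms Teq_pos by (simp add: power2_eq_square field_simps)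
  finally have volterra0: "volterra Teq (T 0) \<le> \<delta>" .
  have "incidence t \<le> b * (2 * Teq) * \<delta>" if "t \<in> {-\<tau>..0}" for t
  proof -
    have "T t \<le> 2 * Teq" "V t \<le> \<delta>" "T t \<ge> 0" "V t \<ge> 0"
      using close[OF that] initial_nonneg[OF that] assms by auto
    then have "b * T t * V t \<le> b * (2 * Teq) * \<delta>" using b by (intro mult_mono) auto
    then show ?thesis using incidence_le[of t] that by simp
  qed
  then have "delay_term 0 \<le> \<tau> * (b * (2 * Teq) * \<delta>)" by (rule delay_term_0_le)
  moreover have "b * Teq / c * V 0 \<le> b * Teq / c * \<delta>"
    using close0 b c Teq_pos by (intro mult_left_mono) auto
  ultimately show ?thesis
    using volterra0 close0 unfolding lyapunov_def by (simp add: algebra_simps)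
qed

lemma state_bounded:
  assumes R0: "R0_num s d a Tmax b \<mu> p c \<le> 1"
  obtains B where "\<And>t. t \<ge> 1 \<Longrightarrow> T t \<le> B \<and> I t \<le> B \<and> V t \<le> B"
proof
  define w where "w = b * Teq / c"
  have w: "w > 0" using b c Teq_pos by (simp add: w_def)
  define L where "L = lyapunov 1"
  fix t :: real assume "t \<ge> 1"
  then have "T t > 0" "I t \<ge> 0" "V t \<ge> 0" "delay_term t \<ge> 0"
    using T_pos state_nonneg[of t] delay_term_nonneg[of t] \<tau> by auto
  moreover have "lyapunov t \<le> L"
    unfolding L_def using \<open>t \<ge> 1\<close> T_pos by (intro lyapunov_antimono[OF R0]) auto
  moreover have "T t / 2 - Teq \<le> volterra Teq (T t)" "volterra Teq (T t) \<ge> 0"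
    using volterra_ge_half[OF Teq_pos \<open>T t > 0\<close>] volterra_nonneg[OF Teq_pos \<open>T t > 0\<close>] .
  moreover have "w * V t \<ge> 0" using w \<open>V t \<ge> 0\<close> by simp
  ultimately have "T t \<le> 2 * (L + Teq) \<and> I t \<le> L \<and> w * V t \<le> L"
    unfolding lyapunov_def w_def[symmetric] by auto
  moreover have "V t \<le> L / w" using calculation w by (simp add: field_simps)
  ultimately show "T t \<le> max (2 * (L + Teq)) (max L (L / w))
      \<and> I t \<le> max (2 * (L + Teq)) (max L (L / w)) \<and> V t \<le> max (2 * (L + Teq)) (max L (L / w))"
    by auto
qed

lemma rates_bounded:
  assumes "\<And>t. t \<ge> 1 \<Longrightarrow> T t \<le> B \<and> I t \<le> B \<and> V t \<le> B"
  obtains C where "\<And>t. t > 1 + \<tau> \<Longrightarrow> \<bar>T_rate t\<bar> \<le> C \<and> \<bar>I_rate t\<bar> \<le> C \<and> \<bar>V_rate t\<bar> \<le> C"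
proof
  define C where "C = s + d * B + a * B * (1 + 2 * B / Tmax) + b * B * B + \<mu> * B + p * B + c * B"
  fix t assume "t > 1 + \<tau>"
  have state: "0 \<le> T u \<and> T u \<le> B \<and> 0 \<le> I u \<and> I u \<le> B \<and> 0 \<le> V u \<and> V u \<le> B" if "u \<ge> 1" for u
    using assms[OF that] state_nonneg[of u] that \<tau> by auto
  then have B: "B \<ge> 0" by force
  have incidence: "0 \<le> incidence u \<and> incidence u \<le> b * B * B" if "u \<ge> 1" for u
  proof -
    have "b * T u * V u \<le> b * B * B" using state[OF that] b by (intro mult_mono) auto
    then show ?thesis using incidence_le[of u] incidence_nonneg[of u] that \<tau> by auto
  qed
  have logistic: "\<bar>a * X * (1 - (T u + I u) / Tmax)\<bar> \<le> a * B * (1 + 2 * B / Tmax)"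
    if "u \<ge> 1" "0 \<le> X" "X \<le> B" for u X
    using state[OF that(1)] that by (intro logistic_term_bound a Tmax) auto
  have t: "t \<ge> 1" "t - \<tau> \<ge> 1" using \<open>t > 1 + \<tau>\<close> \<tau> by auto
  note bounds = state[OF t(1)] incidence[OF t(1)] incidence[OF t(2)]
    logistic[OF t(1), of "T t"] logistic[OF t(1), of "I t"]
  have nonneg: "0 \<le> d * B" "0 \<le> \<mu> * B" "0 \<le> p * B" "0 \<le> c * B" "0 \<le> b * B * B"
    "0 \<le> a * B * (1 + 2 * B / Tmax)"
    using B d \<mu> p c b a Tmax by simp_all
  have "d * T t \<le> d * B" "\<mu> * I t \<le> \<mu> * B" "p * I t \<le> p * B" "c * V t \<le> c * B"
    using bounds d \<mu> p c by (simp_all add: mult_left_mono)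
  moreover have "0 \<le> d * T t" "0 \<le> \<mu> * I t" "0 \<le> p * I t" "0 \<le> c * V t"
    using bounds d \<mu> p c by simp_all
  ultimately show "\<bar>T_rate t\<bar> \<le> C \<and> \<bar>I_rate t\<bar> \<le> C \<and> \<bar>V_rate t\<bar> \<le> C"
    using bounds nonneg s unfolding T_rate_def I_rate_def V_rate_def C_def abs_le_iff
    by (smt (verit))
qed

lemma bounded_after_delay:
  assumes R0: "R0_num s d a Tmax b \<mu> p c \<le> 1"
  obtains B C where "B > 0"
    and "\<And>t. t \<ge> 1 + \<tau> \<Longrightarrow> 0 < T t \<and> T t \<le> B \<and> 0 \<le> I t \<and> I t \<le> B \<and> 0 \<le> V t \<and> V t \<le> B"
    and "\<And>t. t > 1 + \<tau> \<Longrightarrow> \<bar>T_rate t\<bar> \<le> C \<and> \<bar>I_rate t\<bar> \<le> C \<and> \<bar>V_rate t\<bar> \<le> C"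
proof -
  obtain B where B: "\<And>t. t \<ge> 1 \<Longrightarrow> T t \<le> B \<and> I t \<le> B \<and> V t \<le> B"
    using state_bounded[OF R0] by blast
  obtain C where "\<And>t. t > 1 + \<tau> \<Longrightarrow> \<bar>T_rate t\<bar> \<le> C \<and> \<bar>I_rate t\<bar> \<le> C \<and> \<bar>V_rate t\<bar> \<le> C"
    using rates_bounded[OF B] by blast
  moreover have state: "0 < T t \<and> T t \<le> B \<and> 0 \<le> I t \<and> I t \<le> B \<and> 0 \<le> V t \<and> V t \<le> B"
    if "t \<ge> 1 + \<tau>" for t
    using B[of t] T_pos[of t] state_nonneg[of t] that \<tau> by auto
  moreover have "B > 0" using state[of "1 + \<tau>"] by auto
  ultimately show ?thesis using that by blast
qed

lemma tendsto_zero_if_dissipated: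
  assumes R0: "R0_num s d a Tmax b \<mu> p c \<le> 1" and "k > 0"
    and dissipation: "\<And>t. t > 1 + \<tau> \<Longrightarrow> lyapunov_rate t \<le> - k * (f t)\<^sup>2"
    and cont: "continuous_on {-\<tau>..} f"
    and "\<And>t. t > 0 \<Longrightarrow> (f has_real_derivative f' t) (at t)"
    and "\<And>t. t \<ge> 1 + \<tau> \<Longrightarrow> \<bar>f t\<bar> \<le> A" "\<And>t. t > 1 + \<tau> \<Longrightarrow> \<bar>f' t\<bar> \<le> C"
  shows "(f \<longlongrightarrow> 0) at_top"
proof (rule Lyapunov_square_tendsto_zero[OF lyapunov_cont _ dissipation _ \<open>k > 0\<close> _ _ assms(6,7)])
  show "T (1 + \<tau>) > 0" using T_pos \<tau> by simp
  show "(lyapunov has_real_derivative lyapunov_rate t) (at t)" if "t > 1 + \<tau>" for t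
    using lyapunov_has_derivative that \<tau> by simp
  show "lyapunov t \<ge> 0" if "t \<ge> 1 + \<tau>" for t
    using lyapunov_nonneg T_pos that \<tau> by simp
  show "continuous_on {1 + \<tau>..} f" by (rule continuous_on_subset[OF cont]) (use \<tau> in auto)
  show "(f has_real_derivative f' t) (at t)" if "t > 1 + \<tau>" for t
    using assms(5) that \<tau> by simp
qed (use \<tau> in simp)

lemma T_tendsto_Teq:
  assumes R0: "R0_num s d a Tmax b \<mu> p c \<le> 1"
  shows "(T \<longlongrightarrow> Teq) at_top"
proof -
  obtain B C where "B > 0"
    and state: "\<And>t. t \<ge> 1 + \<tau> \<Longrightarrow> 0 < T t \<and> T t \<le> B"
    and rate: "\<And>t. t > 1 + \<tau> \<Longrightarrow> \<bar>T_rate t\<bar> \<le> C"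
    using bounded_after_delay[OF R0] by metis
  have "((\<lambda>t. T t - Teq) \<longlongrightarrow> 0) at_top"
  proof (rule tendsto_zero_if_dissipated[OF R0, of "s / (Teq * B)" _ T_rate "B + Teq" C])
    fix t assume t: "t > 1 + \<tau>"
    then have "s / (Teq * B) \<le> s / (Teq * T t)"
      using state[of t] s Teq_pos by (intro divide_left_mono mult_left_mono) auto
    then show "lyapunov_rate t \<le> - (s / (Teq * B)) * (T t - Teq)\<^sup>2"
      using lyapunov_rate_le(2)[OF _ R0, of t] t \<tau>
        mult_right_mono[of "s / (Teq * B)" "s / (Teq * T t)" "(T t - Teq)\<^sup>2"] by simp
  next
    show "\<bar>T t - Teq\<bar> \<le> B + Teq" if "t \<ge> 1 + \<tau>" for t
      using state[OF that] Teq_pos by (simp add: abs_le_iff)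
  qed (use s Teq_pos \<open>B > 0\<close> T_cont T_deriv rate
       in \<open>auto intro!: continuous_intros derivative_eq_intros\<close>)
  then show ?thesis by (simp add: LIM_zero_iff)
qed

lemma T_plus_I_tendsto_Teq:
  assumes R0: "R0_num s d a Tmax b \<mu> p c \<le> 1"
  shows "((\<lambda>t. T t + I t) \<longlongrightarrow> Teq) at_top"
proof -
  obtain B C where state: "\<And>t. t \<ge> 1 + \<tau> \<Longrightarrow> 0 < T t \<and> T t \<le> B \<and> 0 \<le> I t \<and> I t \<le> B"
    and rate: "\<And>t. t > 1 + \<tau> \<Longrightarrow> \<bar>T_rate t\<bar> \<le> C \<and> \<bar>I_rate t\<bar> \<le> C"
    using bounded_after_delay[OF R0] by metis
  have "((\<lambda>t. T t + I t - Teq) \<longlongrightarrow> 0) at_top"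
  proof (rule tendsto_zero_if_dissipated[OF R0, of "a / Tmax" _ "\<lambda>t. T_rate t + I_rate t"
        "2 * B + Teq" "2 * C"])
    show "lyapunov_rate t \<le> - (a / Tmax) * (T t + I t - Teq)\<^sup>2" if "t > 1 + \<tau>" for t
      using lyapunov_rate_le(1)[OF _ R0, of t] that \<tau> by (simp add: algebra_simps)
    show "\<bar>T_rate t + I_rate t\<bar> \<le> 2 * C" if "t > 1 + \<tau>" for t
      using rate[OF that] abs_triangle_ineq[of "T_rate t" "I_rate t"] by linarith
    show "\<bar>T t + I t - Teq\<bar> \<le> 2 * B + Teq" if "t \<ge> 1 + \<tau>" for t
      using state[OF that] Teq_pos by (simp add: abs_le_iff)
  qed (use a Tmax T_cont I_cont T_deriv I_deriv
       in \<open>auto intro!: continuous_intros derivative_eq_intros\<close>)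
  then show ?thesis by (simp add: LIM_zero_iff)
qed

lemma V_tendsto_0:
  assumes R0: "R0_num s d a Tmax b \<mu> p c \<le> 1"
  shows "(V \<longlongrightarrow> 0) at_top"
proof -
  obtain B C where "B > 0" and state: "\<And>t. t \<ge> 1 + \<tau> \<Longrightarrow> 0 \<le> V t \<and> V t \<le> B"
    and rate: "\<And>t. t > 1 + \<tau> \<Longrightarrow> \<bar>V_rate t\<bar> \<le> C"
    using bounded_after_delay[OF R0] by metis
  show ?thesis
  proof (rule tendsto_zero_if_dissipated[OF R0, of "b * Teq * \<alpha> / (1 + \<alpha> * B)" _ V_rate B C])
    fix t assume t: "t > 1 + \<tau>"
    then have "b * Teq * \<alpha> / (1 + \<alpha> * B) \<le> b * Teq * \<alpha> / (1 + \<alpha> * V t)"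
      using state[of t] b \<alpha> Teq_pos
      by (intro divide_left_mono mult_pos_pos add_pos_nonneg) (auto intro: mult_left_mono)
    then show "lyapunov_rate t \<le> - (b * Teq * \<alpha> / (1 + \<alpha> * B)) * (V t)\<^sup>2"
      using lyapunov_rate_le(3)[OF _ R0, of t] t \<tau>
        mult_right_mono[of _ _ "(V t)\<^sup>2"] by (smt (verit) zero_le_power2)
  qed (use b \<alpha> Teq_pos \<open>B > 0\<close> V_cont V_deriv state rate
       in \<open>auto intro!: divide_pos_pos add_pos_pos\<close>)
qed

end

context infection_model
begin

lemma infection_free_equilibrium_stable:
  assumes R0: "R0_num s d a Tmax b \<mu> p c \<le> 1" and "\<epsilon> > 0"
  shows "\<exists>\<delta>>0. \<forall>T I V. is_solution s d a Tmax b \<alpha> \<mu> p c \<tau> T I V \<longrightarrow>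
      (\<forall>t\<in>{-\<tau>..0}. \<bar>T t - Teq\<bar> < \<delta> \<and> \<bar>I t\<bar> < \<delta> \<and> \<bar>V t\<bar> < \<delta>) \<longrightarrow>
      (\<forall>t\<ge>0. \<bar>T t - Teq\<bar> < \<epsilon> \<and> \<bar>I t\<bar> < \<epsilon> \<and> \<bar>V t\<bar> < \<epsilon>)"
proof -
  define w where "w = b * Teq / c"
  have "w > 0" using b c Teq_pos by (simp add: w_def)
  obtain \<eta> where "\<eta> > 0" and close: "\<And>x y z. x > 0 \<Longrightarrow> y \<ge> 0 \<Longrightarrow> z \<ge> 0 \<Longrightarrow>
      volterra Teq x + y + w * z < \<eta> \<Longrightarrow> \<bar>x - Teq\<bar> < \<epsilon> \<and> y < \<epsilon> \<and> z < \<epsilon>"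
    using volterra_sum_small_imp_close[OF Teq_pos \<open>w > 0\<close> \<open>\<epsilon> > 0\<close>] by blast
  define Q where "Q = 2 + w + 2 * \<tau> * b * Teq"
  have "Q > 0" using \<open>w > 0\<close> \<tau> b Teq_pos by (simp add: Q_def add_pos_nonneg)
  define \<delta> where "\<delta> = min (Teq / 2) (\<eta> / Q)"
  have \<delta>: "\<delta> > 0" "\<delta> \<le> Teq / 2" "Q * \<delta> \<le> \<eta>"
    using Teq_pos \<open>\<eta> > 0\<close> \<open>Q > 0\<close> by (auto simp: \<delta>_def min_def field_simps)
  show ?thesis
  proof (intro exI[of _ \<delta>] conjI[OF \<delta>(1)] allI impI)
    fix T I V :: "real \<Rightarrow> real" and t :: real
    assume sol: "is_solution s d a Tmax b \<alpha> \<mu> p c \<tau> T I V"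
      and init: "\<forall>t\<in>{-\<tau>..0}. \<bar>T t - Teq\<bar> < \<delta> \<and> \<bar>I t\<bar> < \<delta> \<and> \<bar>V t\<bar> < \<delta>" and "t \<ge> 0"
    interpret infection_solution s d a Tmax b \<alpha> \<mu> p c \<tau> T I V by unfold_locales (fact sol)
    have "\<bar>T 0 - Teq\<bar> < \<delta>" using init \<tau> by simp
    then have "T 0 > 0" using \<delta> by linarith
    then have "T t > 0" using T_pos \<open>t \<ge> 0\<close> by (cases "t = 0") auto
    have "lyapunov t \<le> lyapunov 0" using lyapunov_antimono[OF R0 _ \<open>T 0 > 0\<close> \<open>t \<ge> 0\<close>] by simp
    also have "\<dots> < Q * \<delta>"
      using lyapunov_0_less[OF \<delta>(1,2)] init by (simp add: Q_def w_def)
    finally have "volterra Teq (T t) + I t + w * V t < \<eta>"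
      using delay_term_nonneg[OF \<open>t \<ge> 0\<close>] \<delta>(3) unfolding lyapunov_def w_def by linarith
    then show "\<bar>T t - Teq\<bar> < \<epsilon> \<and> \<bar>I t\<bar> < \<epsilon> \<and> \<bar>V t\<bar> < \<epsilon>"
      using close[OF \<open>T t > 0\<close>] state_nonneg[of t] \<open>t \<ge> 0\<close> \<tau> by auto
  qed
qed

lemma infection_free_equilibrium_attractive:
  assumes R0: "R0_num s d a Tmax b \<mu> p c \<le> 1"
  shows "\<forall>T I V. is_solution s d a Tmax b \<alpha> \<mu> p c \<tau> T I V \<longrightarrow>
    (T \<longlongrightarrow> Teq) at_top \<and> (I \<longlongrightarrow> 0) at_top \<and> (V \<longlongrightarrow> 0) at_top"
proof (intro allI impI)
  fix T I V assume "is_solution s d a Tmax b \<alpha> \<mu> p c \<tau> T I V"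
  then interpret infection_solution s d a Tmax b \<alpha> \<mu> p c \<tau> T I V by unfold_locales
  have "(I \<longlongrightarrow> Teq - Teq) at_top"
    using tendsto_diff[OF T_plus_I_tendsto_Teq[OF R0] T_tendsto_Teq[OF R0]] by simp
  then show "(T \<longlongrightarrow> Teq) at_top \<and> (I \<longlongrightarrow> 0) at_top \<and> (V \<longlongrightarrow> 0) at_top"
    using T_tendsto_Teq[OF R0] V_tendsto_0[OF R0] by simp
qed

end

theorem theorem3:
  fixes s d a Tmax b \<alpha> \<mu> p c \<tau> :: real
  assumes "s > 0" "d > 0" "a > 0" "Tmax > 0" "b > 0" "\<alpha> > 0" "\<mu> > 0" "p > 0" "c > 0"
    and "\<tau> \<ge> 0"
    and "R0_num s d a Tmax b \<mu> p c \<le> 1"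
  shows
    "(\<forall>\<epsilon>>0. \<exists>\<delta>>0. \<forall>T I V. is_solution s d a Tmax b \<alpha> \<mu> p c \<tau> T I V \<longrightarrow>
        (\<forall>t\<in>{-\<tau>..0}. \<bar>T t - T0_eq s d a Tmax\<bar> < \<delta> \<and> \<bar>I t\<bar> < \<delta> \<and> \<bar>V t\<bar> < \<delta>) \<longrightarrow>
        (\<forall>t\<ge>0. \<bar>T t - T0_eq s d a Tmax\<bar> < \<epsilon> \<and> \<bar>I t\<bar> < \<epsilon> \<and> \<bar>V t\<bar> < \<epsilon>))
     \<and>
     (\<forall>T I V. is_solution s d a Tmax b \<alpha> \<mu> p c \<tau> T I V \<longrightarrow>
        (T \<longlongrightarrow> T0_eq s d a Tmax) at_top \<and> (I \<longlongrightarrow> 0) at_top \<and> (V \<longlongrightarrow> 0) at_top)"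
proof -
  interpret infection_model s d a Tmax b \<alpha> \<mu> p c \<tau>
    using assms(1-10) by unfold_locales
  show ?thesis
    using infection_free_equilibrium_stable[OF assms(11)]
      infection_free_equilibrium_attractive[OF assms(11)] by simp
qed

end
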